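(* Let $n>5$ with $n\equiv 3\pmod 4$, and consider odd $r\in[3,n-4]$. Then $E(D_n^s[r,n-r-1])$ attains its maximum at $r=3$, and $$E(D_n^s[3,n-4])>E(D_n^s[5,n-6])>\dots>E\!\left(D_n^s\!\left[\tfrac{n-1}{2},\tfrac{n-1}{2}\right]\right),$$ the chain running over odd $r=3,5,7,\dots,\frac{n-1}{2}$.
   Context: A signed digraph (sidigraph) is a digraph in which every arc carries a sign $+1$ or $-1$; the energy of a sidigraph is the sum of the absolute values of the real parts of the eigenvalues of its signed adjacency matrix. For $k\ge 2$, $C_k$ denotes a directed cycle of length $k$ all of whose arc signs multiply to $+1$. It is known that for odd $k$, $E(C_k)=\csc\frac{\pi}{2k}$ (and the same holds for a negative cycle of odd length). For integers $p,q\ge2$ with $p+q\le n$, $D_n^s[p,q]$ denotes an $n$-vertex sidigraph whose only directed cycles are two vertex-disjoint positive cycles $C_p$ and $C_q$ (other vertices lie on no directed cycle); its energy is $E(C_p)+E(C_q)$. *)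

theory Defs
  imports Complex_Main "Jordan_Normal_Form.Char_Poly"
begin

definition mat_energy :: "complex mat \<Rightarrow> real" where
  "mat_energy A = (\<Sum>z\<in>#proots (char_poly A). \<bar>Re z\<bar>)"

text \<open>Signed adjacency matrix of the representative n-vertex sidigraph
D_n^s[p,q]: vertices 0..p-1 form the directed cycle 0->1->...->p-1->0,
vertices p..p+q-1 form the directed cycle p->p+1->...->p+q-1->p, all arcs
carry sign +1 (so both cycles are positive), and the remaining vertices
p+q..n-1 carry no arcs (hence lie on no directed cycle).\<close>
definition two_cycle_mat :: "nat \<Rightarrow> nat \<Rightarrow> nat \<Rightarrow> complex mat" where
  "two_cycle_mat n p q = mat n n (\<lambda>(i, j).
     if (i < p \<and> j = (i + 1) mod p) \<or>
        (p \<le> i \<and> i < p + q \<and> j = p + (i - p + 1) mod q) then 1 else 0)"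

definition E_D :: "nat \<Rightarrow> nat \<Rightarrow> nat \<Rightarrow> real" where
  "E_D n p q = mat_energy (two_cycle_mat n p q)"

end

theory Submission
  imports Defs
begin

(* The signed adjacency matrix of D_n^s[p,q] is block diagonal, the blocks being the permutation
   matrices of the two cycles and a zero block. Its characteristic polynomial is therefore
   (x^p - 1)(x^q - 1) x^(n-p-q), and its energy is the sum of |Re z| over the p-th and the q-th
   roots of unity. For odd p this sum is csc(pi/2p): the substitution k -> 2k + m (p = 2m + 1)
   moves every angle 2 pi k/p by a multiple of pi to an angle (j - m) pi/p in (-pi/2, pi/2), and
   the resulting centred cosine sum telescopes.
   The function f(x) = csc(pi/2x) is strictly convex for x > 1, since
   f'(x) = (2/pi) phi(pi/2x) with phi(u) = u^2 cos u / sin^2 u decreasing on (0, pi/2).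
   Hence for r + q = n - 1 fixed, f(r) + f(q) strictly increases as the pair (r, q) spreads
   apart, which gives both the maximum at r = 3 and the strictly decreasing chain. *)

definition cycle_mat :: "nat \<Rightarrow> 'a :: {zero,one} mat" where
  "cycle_mat p = mat p p (\<lambda>(i, j). if j = (i + 1) mod p then 1 else 0)"

lemma cycle_mat_carrier [simp]: "cycle_mat p \<in> carrier_mat p p"
  by (simp add: cycle_mat_def)

lemma char_poly_matrix_cycle_mat_index:
  assumes "i < p" "j < p"
  shows "char_poly_matrix (cycle_mat p :: 'a :: comm_ring_1 mat) $$ (i, j) =
    (if i = j then [:0, 1:] else 0) - (if j = (i + 1) mod p then 1 else 0)"
  using assms by (auto simp: char_poly_matrix_def cycle_mat_def mod_if one_pCons)

lemma prod_list_diag_mat_const: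
  assumes "\<And>i. i < dim_row A \<Longrightarrow> A $$ (i, i) = c"
  shows "prod_list (diag_mat A) = c ^ dim_row A"
proof -
  have "diag_mat A = replicate (dim_row A) c"
    unfolding diag_mat_def by (rule nth_equalityI) (auto simp: assms)
  thus ?thesis by simp
qed

lemma char_poly_cycle_mat:
  assumes p: "p \<ge> 2"
  shows "char_poly (cycle_mat p :: 'a :: comm_ring_1 mat) = [:0, 1:] ^ p - 1"
proof -
  define M where "M = char_poly_matrix (cycle_mat p :: 'a mat)"
  have M: "M \<in> carrier_mat p p" by (simp add: M_def)
  hence [simp]: "dim_row M = p" "dim_col M = p" by auto
  have M_index: "M $$ (i, j) = (if i = j then [:0, 1:] else 0) - (if j = (i + 1) mod p then 1 else 0)"
    if "i < p" "j < p" for i j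
    using char_poly_matrix_cycle_mat_index[OF that] by (simp add: M_def)
  (* Laplace expansion along column 0: only row 0 (the diagonal) and row p - 1 (the arc p - 1 -> 0)
     contribute, and both minors are triangular. *)
  have "det M = (\<Sum>i<p. M $$ (i, 0) * cofactor M i 0)"
    by (rule laplace_expansion_column[OF M]) (use p in auto)
  also have "\<dots> = (\<Sum>i\<in>{0, p - 1}. M $$ (i, 0) * cofactor M i 0)"
  proof (rule sum.mono_neutral_right)
    show "\<forall>i\<in>{..<p} - {0, p - 1}. M $$ (i, 0) * cofactor M i 0 = 0"
    proof
      fix i assume i: "i \<in> {..<p} - {0, p - 1}"
      hence "(i + 1) mod p \<noteq> 0" using p by (auto simp: mod_if)
      thus "M $$ (i, 0) * cofactor M i 0 = 0" using i p by (auto simp: M_index)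
    qed
  qed (use p in auto)
  also have "\<dots> = [:0, 1:] * cofactor M 0 0 - cofactor M (p - 1) 0"
    using p by (simp add: M_index mod_if)
  also have "cofactor M 0 0 = [:0, 1:] ^ (p - 1)"
  proof -
    have "det (mat_delete M 0 0) = prod_list (diag_mat (mat_delete M 0 0))"
    proof (rule det_upper_triangular)
      show "upper_triangular (mat_delete M 0 0)"
        using p by (auto simp: upper_triangular_def mat_delete_def M_index mod_if)
    qed (rule mat_delete_carrier[OF M])
    also have "\<dots> = [:0, 1:] ^ (p - 1)"
      by (subst prod_list_diag_mat_const[where c = "[:0, 1:]"])
        (use p in \<open>auto simp: mat_delete_def M_index mod_if\<close>)
    finally show ?thesis by (simp add: cofactor_def)
  qed
  also have "cofactor M (p - 1) 0 = 1"
  proof -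
    have "det (mat_delete M (p - 1) 0) = prod_list (diag_mat (mat_delete M (p - 1) 0))"
    proof (rule det_lower_triangular)
      fix i j assume "i < j" "j < p - 1"
      thus "mat_delete M (p - 1) 0 $$ (i, j) = 0"
        using p by (auto simp: mat_delete_def M_index mod_if)
    qed (rule mat_delete_carrier[OF M])
    also have "\<dots> = (-1) ^ (p - 1)"
      by (subst prod_list_diag_mat_const[where c = "-1"])
        (use p in \<open>auto simp: mat_delete_def M_index mod_if\<close>)
    finally show ?thesis
      using p by (simp add: cofactor_def power_mult_distrib[symmetric] flip: power_add)
  qed
  finally show ?thesis
    using p by (simp add: char_poly_def M_def flip: power_Suc)
qed

lemma char_poly_four_block_diag:
  fixes A :: "'a :: idom mat"
  assumes A: "A \<in> carrier_mat n n" and D: "D \<in> carrier_mat m m"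
  shows "char_poly (four_block_mat A (0\<^sub>m n m) (0\<^sub>m m n) D) = char_poly A * char_poly D"
proof -
  have "char_poly_matrix (four_block_mat A (0\<^sub>m n m) (0\<^sub>m m n) D) =
      four_block_mat (char_poly_matrix A) (0\<^sub>m n m) (0\<^sub>m m n) (char_poly_matrix D)"
    using A D by (intro eq_matI) (auto simp: char_poly_matrix_def)
  moreover have "det (four_block_mat (char_poly_matrix A) (0\<^sub>m n m) (0\<^sub>m m n) (char_poly_matrix D)) =
      det (char_poly_matrix A) * det (char_poly_matrix D)"
    by (rule det_four_block_mat_upper_right_zero) (use A D in auto)
  ultimately show ?thesis by (simp add: char_poly_def)
qed

lemma char_poly_zero_mat: "char_poly (0\<^sub>m k k :: 'a :: comm_ring_1 mat) = [:0, 1:] ^ k"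
proof -
  have "char_poly_matrix (0\<^sub>m k k :: 'a mat) = [:0, 1:] \<cdot>\<^sub>m 1\<^sub>m k"
    by (intro eq_matI) (auto simp: char_poly_matrix_def)
  thus ?thesis by (simp add: char_poly_def det_smult)
qed

lemma two_cycle_mat_four_block:
  assumes "p + q \<le> n"
  shows "two_cycle_mat n p q = four_block_mat (cycle_mat p) (0\<^sub>m p (n - p)) (0\<^sub>m (n - p) p)
    (four_block_mat (cycle_mat q) (0\<^sub>m q (n - p - q)) (0\<^sub>m (n - p - q) q) (0\<^sub>m (n - p - q) (n - p - q)))"
    (is "_ = ?B")
proof (rule eq_matI)
  fix i j assume "i < dim_row ?B" "j < dim_col ?B"
  hence "i < n" "j < n" using assms by (auto simp: cycle_mat_def)
  have mod_p: "(i + 1) mod p < p" if "i < p" using that by simp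
  have mod_q: "(i - p + 1) mod q < q" if "p \<le> i" "i < p + q" using that by simp
  show "two_cycle_mat n p q $$ (i, j) = ?B $$ (i, j)"
    by (cases "i < p"; cases "j < p"; cases "i < p + q"; cases "j < p + q")
      (use \<open>i < n\<close> \<open>j < n\<close> assms in \<open>auto simp: two_cycle_mat_def cycle_mat_def dest: mod_p mod_q\<close>)
qed (use assms in \<open>auto simp: two_cycle_mat_def cycle_mat_def\<close>)

lemma char_poly_two_cycle_mat:
  assumes "2 \<le> p" "2 \<le> q" "p + q \<le> n"
  shows "char_poly (two_cycle_mat n p q) =
    ([:0, 1:] ^ p - 1) * (([:0, 1:] ^ q - 1) * [:0, 1:] ^ (n - p - q))"
proof -
  define k where "k = n - p - q"
  have "n - p = q + k" using assms by (simp add: k_def)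
  hence "two_cycle_mat n p q = four_block_mat (cycle_mat p) (0\<^sub>m p (q + k)) (0\<^sub>m (q + k) p)
      (four_block_mat (cycle_mat q) (0\<^sub>m q k) (0\<^sub>m k q) (0\<^sub>m k k))"
    using two_cycle_mat_four_block[OF assms(3)] by (simp add: k_def)
  hence "char_poly (two_cycle_mat n p q) =
      char_poly (cycle_mat p) * (char_poly (cycle_mat q) * char_poly (0\<^sub>m k k :: complex mat))"
    by (simp add: char_poly_four_block_diag)
  thus ?thesis
    using assms by (simp add: char_poly_cycle_mat char_poly_zero_mat k_def)
qed

lemma proots_rsquarefree:
  fixes p :: "'a :: idom poly"
  assumes "rsquarefree p"
  shows "proots p = mset_set {x. poly p x = 0}"
proof (rule multiset_eqI)
  fix x
  have "p \<noteq> 0" using assms by (simp add: rsquarefree_def)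
  hence "finite {x. poly p x = 0}" by (rule poly_roots_finite)
  thus "count (proots p) x = count (mset_set {x. poly p x = 0}) x"
    using assms \<open>p \<noteq> 0\<close> by (auto simp: count_mset_set' rsquarefree_root_order order_0I)
qed

lemma rsquarefree_X_pow_minus_one:
  assumes "p \<ge> 1"
  shows "rsquarefree ([:0, 1:] ^ p - 1 :: 'a :: field_char_0 poly)"
  unfolding rsquarefree_roots
proof (intro allI notI)
  fix z :: 'a
  assume roots: "poly ([:0, 1:] ^ p - 1) z = 0 \<and> poly (pderiv ([:0, 1:] ^ p - 1)) z = 0"
  hence "z ^ p = 1" by (simp add: poly_power)
  moreover have "of_nat p * z ^ (p - 1) = 0"
    using roots by (simp add: pderiv_diff pderiv_power pderiv_pCons poly_power)
  hence "z = 0" using assms by simp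
  ultimately show False using assms by (simp add: power_0_left)
qed

lemma proots_X_pow_minus_one:
  assumes "p \<ge> 1"
  shows "proots ([:0, 1:] ^ p - 1 :: 'a :: field_char_0 poly) = mset_set {z. z ^ p = 1}"
  using proots_rsquarefree[OF rsquarefree_X_pow_minus_one[OF assms]] by (simp add: poly_power)

lemma X_pow_minus_one_nonzero:
  assumes "p \<ge> 1"
  shows "([:0, 1:] ^ p - 1 :: 'a :: field_char_0 poly) \<noteq> 0"
  using rsquarefree_X_pow_minus_one[OF assms] unfolding rsquarefree_def by (rule conjunct1)

lemma E_D_eq_sum_roots_unity:
  assumes "2 \<le> p" "2 \<le> q" "p + q \<le> n"
  shows "E_D n p q = (\<Sum>z | z ^ p = 1. \<bar>Re z\<bar>) + (\<Sum>z | z ^ q = 1. \<bar>Re z\<bar>)"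
proof -
  have nz: "([:0, 1:] ^ p - 1 :: complex poly) \<noteq> 0" "([:0, 1:] ^ q - 1 :: complex poly) \<noteq> 0"
    using assms by (intro X_pow_minus_one_nonzero; simp)+
  have "proots (char_poly (two_cycle_mat n p q)) =
      proots ([:0, 1:] ^ p - 1) + (proots ([:0, 1:] ^ q - 1) + proots ([:0, 1:] ^ (n - p - q)))"
    unfolding char_poly_two_cycle_mat[OF assms] using nz by (simp add: proots_mult)
  also have "\<dots> = mset_set {z. z ^ p = 1} + (mset_set {z. z ^ q = 1} + repeat_mset (n - p - q) {#0#})"
    using assms proots_linear_factor[of 0] by (simp add: proots_X_pow_minus_one proots_power)
  finally show ?thesis
    by (simp add: E_D_def mat_energy_def sum_unfold_sum_mset)
qed

lemma inj_on_affine_mod: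
  fixes a b p :: nat
  assumes "coprime a p"
  shows "inj_on (\<lambda>k. (a * k + b) mod p) {..<p}"
proof -
  have "k = l" if "k \<le> l" "l < p" "(a * k + b) mod p = (a * l + b) mod p" for k l
  proof -
    have "p dvd (a * l + b) - (a * k + b)"
      using that mod_eq_dvd_iff_nat[of "a * k + b" "a * l + b" p] by simp
    hence "p dvd a * (l - k)" by (simp add: diff_mult_distrib2)
    hence "p dvd l - k" using assms by (simp add: coprime_commute coprime_dvd_mult_right_iff)
    thus "k = l" using that by (auto dest: dvd_imp_le)
  qed
  thus ?thesis by (intro inj_onI) (metis lessThan_iff nat_le_linear)
qed

lemma bij_betw_affine_mod:
  fixes a b p :: nat
  assumes "coprime a p"
  shows "bij_betw (\<lambda>k. (a * k + b) mod p) {..<p} {..<p}"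
proof -
  have "(\<lambda>k. (a * k + b) mod p) ` {..<p} \<subseteq> {..<p}" by (cases "p = 0") auto
  thus ?thesis
    using inj_on_affine_mod[OF assms] by (simp add: bij_betw_def endo_inj_surj)
qed

lemma sin_half_mult_sum_cos_centered:
  "sin (\<theta> / 2) * (\<Sum>j<2 * m + 1. cos ((real j - real m) * \<theta>)) = sin ((real m + 1 / 2) * \<theta>)"
proof -
  define g where "g j = sin ((real j - real m - 1 / 2) * \<theta>)" for j :: nat
  have tel: "2 * sin (\<theta> / 2) * cos ((real j - real m) * \<theta>) = g (Suc j) - g j" for j
  proof -
    have "g (Suc j) = sin ((real j - real m) * \<theta> + \<theta> / 2)"
      "g j = sin ((real j - real m) * \<theta> - \<theta> / 2)"
      by (simp_all add: g_def algebra_simps)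
    thus ?thesis by (simp add: sin_add sin_diff)
  qed
  have "2 * sin (\<theta> / 2) * (\<Sum>j<2 * m + 1. cos ((real j - real m) * \<theta>)) =
      (\<Sum>j<2 * m + 1. g (Suc j) - g j)"
    by (simp only: sum_distrib_left tel)
  also have "\<dots> = g (2 * m + 1) - g 0"
    by (rule sum_lessThan_telescope)
  also have "g (2 * m + 1) = sin ((real m + 1 / 2) * \<theta>)"
  proof -
    have "(real (2 * m + 1) - real m - 1 / 2) * \<theta> = (real m + 1 / 2) * \<theta>" by simp
    thus ?thesis by (simp only: g_def)
  qed
  also have "g 0 = - sin ((real m + 1 / 2) * \<theta>)"
  proof -
    have "(real 0 - real m - 1 / 2) * \<theta> = - ((real m + 1 / 2) * \<theta>)" by (simp add: algebra_simps)
    thus ?thesis by (simp only: g_def sin_minus)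
  qed
  finally show ?thesis by simp
qed

lemma sum_abs_cos_roots_odd:
  "(\<Sum>k<2 * m + 1. \<bar>cos (2 * pi * real k / real (2 * m + 1))\<bar>) = 1 / sin (pi / (2 * real (2 * m + 1)))"
proof -
  define p where "p = 2 * m + 1"
  define \<theta> where "\<theta> = pi / real p"
  have p: "real p > 0" by (simp add: p_def)
  have coprime: "coprime 2 p" by (simp add: p_def)
  have shift: "\<bar>cos (2 * pi * real k / real p)\<bar> = \<bar>cos ((real ((2 * k + m) mod p) - real m) * \<theta>)\<bar>" for k
  proof -
    define t where "t = (2 * k + m) div p"
    have "real (2 * k + m) = real ((2 * k + m) mod p) + real p * real t"
      unfolding t_def by (metis mod_mult_div_eq of_nat_add of_nat_mult)
    hence mod_eq: "real ((2 * k + m) mod p) = 2 * real k + real m - real p * real t" by simp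
    have "(real ((2 * k + m) mod p) - real m) * \<theta> = 2 * pi * real k / real p - real t * pi"
      unfolding mod_eq \<theta>_def using p by (simp add: field_simps)
    thus ?thesis by (simp add: cos_diff abs_mult)
  qed
  have nonneg: "cos ((real j - real m) * \<theta>) \<ge> 0" if "j < p" for j
  proof (rule cos_ge_zero)
    have "\<bar>(real j - real m) * \<theta>\<bar> \<le> real m * \<theta>"
      using that p by (auto simp: p_def \<theta>_def abs_mult divide_right_mono mult_right_mono)
    also have "\<dots> < pi / 2" by (simp add: \<theta>_def p_def field_simps)
    finally show "- (pi / 2) \<le> (real j - real m) * \<theta>" "(real j - real m) * \<theta> \<le> pi / 2" by auto
  qed
  have "(\<Sum>k<p. \<bar>cos (2 * pi * real k / real p)\<bar>) = (\<Sum>k<p. \<bar>cos ((real ((2 * k + m) mod p) - real m) * \<theta>)\<bar>)"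
    by (simp add: shift)
  also have "\<dots> = (\<Sum>j<p. \<bar>cos ((real j - real m) * \<theta>)\<bar>)"
    using sum.reindex_bij_betw[OF bij_betw_affine_mod[OF coprime], of "\<lambda>j. \<bar>cos ((real j - real m) * \<theta>)\<bar>"]
    by simp
  also have "\<dots> = (\<Sum>j<p. cos ((real j - real m) * \<theta>))"
    using nonneg by simp
  also have "\<dots> = 1 / sin (\<theta> / 2)"
  proof -
    have "(real m + 1 / 2) * \<theta> = pi / 2" by (simp add: \<theta>_def p_def field_simps)
    hence "sin (\<theta> / 2) * (\<Sum>j<p. cos ((real j - real m) * \<theta>)) = 1"
      using sin_half_mult_sum_cos_centered[of \<theta> m] by (simp only: p_def sin_pi_half)
    moreover have "sin (\<theta> / 2) \<noteq> 0"
      using pi_gt_zero by (intro sin_gt_zero[THEN less_imp_neq, symmetric])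
        (auto simp: \<theta>_def p_def field_simps add_pos_nonneg)
    ultimately show ?thesis by (simp add: field_simps)
  qed
  finally show ?thesis by (simp add: p_def \<theta>_def)
qed

lemma sum_abs_Re_roots_unity_odd:
  assumes "odd p"
  shows "(\<Sum>z | z ^ p = 1. \<bar>Re z\<bar>) = 1 / sin (pi / (2 * real p))"
proof -
  obtain m where m: "p = 2 * m + 1" using assms oddE by blast
  have "(\<Sum>z | z ^ p = 1. \<bar>Re z\<bar>) = (\<Sum>k<p. \<bar>cos (2 * pi * real k / real p)\<bar>)"
    using sum.reindex_bij_betw[OF bij_betw_roots_unity[of p], of "\<lambda>z. \<bar>Re z\<bar>"] m by simp
  thus ?thesis using sum_abs_cos_roots_odd[of m] m by simp
qed

(* E(C_k) = csc(pi/2k) for odd k, extended to real k so that its convexity can be studied by calculus. *)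
definition odd_cycle_energy :: "real \<Rightarrow> real" where
  "odd_cycle_energy x = 1 / sin (pi / (2 * x))"

lemma has_real_derivative_sq_cos_div_sin_sq:
  assumes "sin u \<noteq> 0"
  shows "((\<lambda>u. u\<^sup>2 * cos u / (sin u)\<^sup>2) has_real_derivative
    u * (2 * cos u * sin u - u * (1 + (cos u)\<^sup>2)) / (sin u) ^ 3) (at u)"
proof -
  have "((\<lambda>u. u\<^sup>2 * cos u / (sin u)\<^sup>2) has_real_derivative
      ((2 * u * cos u - u\<^sup>2 * sin u) * (sin u)\<^sup>2 - u\<^sup>2 * cos u * (2 * sin u * cos u)) / ((sin u)\<^sup>2)\<^sup>2) (at u)"
    by (rule derivative_eq_intros refl | use assms in simp)+
  moreover have "((2 * u * cos u - u\<^sup>2 * sin u) * (sin u)\<^sup>2 - u\<^sup>2 * cos u * (2 * sin u * cos u)) / ((sin u)\<^sup>2)\<^sup>2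
      = u * (2 * cos u * sin u - u * ((sin u)\<^sup>2 + 2 * (cos u)\<^sup>2)) / (sin u) ^ 3"
    using assms by (simp add: field_simps power2_eq_square power3_eq_cube)
  moreover have "(sin u)\<^sup>2 + 2 * (cos u)\<^sup>2 = 1 + (cos u)\<^sup>2" by (simp add: sin_squared_eq)
  ultimately show ?thesis by simp
qed

lemma sq_cos_div_sin_sq_strict_decreasing:
  assumes "0 < u" "u < v" "v < pi / 2"
  shows "v\<^sup>2 * cos v / (sin v)\<^sup>2 < u\<^sup>2 * cos u / (sin u)\<^sup>2"
proof -
  have "\<exists>y. ((\<lambda>u. u\<^sup>2 * cos u / (sin u)\<^sup>2) has_real_derivative y) (at x) \<and> y < 0"
    if "u \<le> x" "x \<le> v" for x
  proof -
    have x: "0 < x" "x < pi / 2" using assms that by auto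
    have sin: "0 < sin x" using x by (intro sin_gt_zero) auto
    have cos: "0 < cos x" using x by (intro cos_gt_zero) auto
    have "cos x < 1" using cos_monotone_0_pi[of 0 x] x by simp
    have "2 * cos x * sin x \<le> 2 * cos x * x" using sin_x_le_x[of x] x cos by simp
    also have "\<dots> < x * (1 + (cos x)\<^sup>2)"
    proof -
      have "0 < x * (1 - cos x)\<^sup>2" using x \<open>cos x < 1\<close> by simp
      thus ?thesis by (simp add: power2_eq_square algebra_simps)
    qed
    finally have "x * (2 * cos x * sin x - x * (1 + (cos x)\<^sup>2)) / (sin x) ^ 3 < 0"
      using x sin by (simp add: mult_pos_neg divide_neg_pos)
    thus ?thesis
      using has_real_derivative_sq_cos_div_sin_sq[of x] sin by auto
  qed
  from DERIV_neg_imp_decreasing[OF assms(2) this] show ?thesis by simp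
qed

lemma has_real_derivative_odd_cycle_energy:
  assumes "x > 1"
  shows "(odd_cycle_energy has_real_derivative
    2 / pi * ((pi / (2 * x))\<^sup>2 * cos (pi / (2 * x)) / (sin (pi / (2 * x)))\<^sup>2)) (at x)"
proof -
  have sin: "sin (pi / (2 * x)) \<noteq> 0"
    using assms by (intro sin_gt_zero[THEN less_imp_neq, symmetric]) (auto simp: field_simps)
  show ?thesis
    unfolding odd_cycle_energy_def[abs_def]
    by (rule derivative_eq_intros refl | use assms sin in simp; fail)+
      (use assms sin in \<open>simp add: field_simps power2_eq_square\<close>)
qed

lemma odd_cycle_energy_spread:
  assumes "1 < a" "0 < d" "a + d \<le> b"
  shows "odd_cycle_energy (a + d) + odd_cycle_energy b < odd_cycle_energy a + odd_cycle_energy (b + d)"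
proof -
  define F' where "F' x = 2 / pi * ((pi / (2 * x))\<^sup>2 * cos (pi / (2 * x)) / (sin (pi / (2 * x)))\<^sup>2)"
    for x
  have deriv: "(odd_cycle_energy has_real_derivative F' x) (at x)" if "1 < x" for x
    using has_real_derivative_odd_cycle_energy[OF that] by (simp add: F'_def)
  obtain y where y: "a < y" "y < a + d" "odd_cycle_energy (a + d) - odd_cycle_energy a = d * F' y"
    using MVT2[of a "a + d" odd_cycle_energy F'] assms deriv by force
  obtain z where z: "b < z" "z < b + d" "odd_cycle_energy (b + d) - odd_cycle_energy b = d * F' z"
    using MVT2[of b "b + d" odd_cycle_energy F'] assms deriv by force
  have "pi / (2 * z) < pi / (2 * y)"
    using y z assms by (intro divide_strict_left_mono) auto
  moreover have "pi / (2 * y) < pi / 2" using y assms by (simp add: field_simps)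
  ultimately have "F' y < F' z"
    unfolding F'_def using y z assms
    by (intro mult_strict_left_mono sq_cos_div_sin_sq_strict_decreasing) auto
  hence "d * F' y < d * F' z" using assms by simp
  thus ?thesis using y(3) z(3) by linarith
qed

lemma odd_cycle_energy_sum_le:
  assumes "1 < c" "c \<le> a" "c \<le> b"
  shows "odd_cycle_energy a + odd_cycle_energy b \<le> odd_cycle_energy c + odd_cycle_energy (a + b - c)"
proof -
  have *: "odd_cycle_energy a + odd_cycle_energy b \<le> odd_cycle_energy c + odd_cycle_energy (a + b - c)"
    if "c \<le> a" "a \<le> b" for a b
  proof (cases "a = c")
    case False
    hence "odd_cycle_energy a + odd_cycle_energy b < odd_cycle_energy c + odd_cycle_energy (b + (a - c))"
      using odd_cycle_energy_spread[of c "a - c" b] assms that by simp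
    moreover have "b + (a - c) = a + b - c" by simp
    ultimately show ?thesis by simp
  qed simp
  show ?thesis
    using *[of a b] *[of b a] assms by (cases "a \<le> b") (simp_all add: add.commute)
qed

lemma E_D_odd_cycles:
  assumes "odd p" "odd q" "3 \<le> p" "3 \<le> q" "p + q \<le> n"
  shows "E_D n p q = odd_cycle_energy (real p) + odd_cycle_energy (real q)"
  using assms
  by (simp add: E_D_eq_sum_roots_unity sum_abs_Re_roots_unity_odd odd_cycle_energy_def)

lemma E_D_complement:
  assumes "odd n" "odd r" "3 \<le> r" "r + 4 \<le> n"
  shows "E_D n r (n - r - 1) = odd_cycle_energy (real r) + odd_cycle_energy (real (n - r - 1))"
  using assms by (intro E_D_odd_cycles) presburger+

lemma E_D_complement_le_three:
  assumes "odd n" "odd r" "3 \<le> r" "r + 4 \<le> n"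
  shows "E_D n r (n - r - 1) \<le> E_D n 3 (n - 4)"
proof -
  have "odd_cycle_energy r + odd_cycle_energy (n - r - 1) \<le>
      odd_cycle_energy 3 + odd_cycle_energy (real r + real (n - r - 1) - 3)"
    using assms by (intro odd_cycle_energy_sum_le) auto
  moreover have "real r + real (n - r - 1) - 3 = real (n - 4)" using assms by linarith
  ultimately show ?thesis
    using E_D_complement[OF assms] E_D_complement[of n 3] assms by simp
qed

lemma E_D_complement_strict_decreasing:
  assumes "odd n" "odd r" "3 \<le> r" "2 * r + 5 \<le> n"
  shows "E_D n (r + 2) (n - (r + 2) - 1) < E_D n r (n - r - 1)"
proof -
  define b where "b = n - (r + 2) - 1"
  have "b + 2 = n - r - 1" using assms by (simp add: b_def)
  hence b: "real b + 2 = real (n - r - 1)" by (metis of_nat_add of_nat_numeral)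
  have "E_D n (r + 2) (n - (r + 2) - 1) = odd_cycle_energy (real (r + 2)) + odd_cycle_energy (real b)"
    unfolding b_def using assms by (intro E_D_complement) auto
  also have "\<dots> = odd_cycle_energy (real r + 2) + odd_cycle_energy (real b)"
    by (simp add: add.commute)
  also have "\<dots> < odd_cycle_energy (real r) + odd_cycle_energy (real b + 2)"
    using assms by (intro odd_cycle_energy_spread) (auto simp: b_def)
  also have "\<dots> = E_D n r (n - r - 1)"
    unfolding b using assms by (intro E_D_complement[symmetric]) auto
  finally show ?thesis .
qed

theorem lemma3p17:
  fixes n :: nat
  assumes "n > 5" and "n mod 4 = 3"
  shows "(\<forall>r. odd r \<and> 3 \<le> r \<and> r \<le> n - 4 \<longrightarrow> E_D n r (n - r - 1) \<le> E_D n 3 (n - 4))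
       \<and> (\<forall>r. odd r \<and> 3 \<le> r \<and> r + 2 \<le> (n - 1) div 2 \<longrightarrow>
              E_D n r (n - r - 1) > E_D n (r + 2) (n - (r + 2) - 1))"
proof -
  have n: "odd n" "7 \<le> n" using assms by presburger+
  show ?thesis
  proof (intro conjI allI impI)
    fix r assume "odd r \<and> 3 \<le> r \<and> r \<le> n - 4"
    thus "E_D n r (n - r - 1) \<le> E_D n 3 (n - 4)"
      using n by (intro E_D_complement_le_three) auto
  next
    fix r assume "odd r \<and> 3 \<le> r \<and> r + 2 \<le> (n - 1) div 2"
    thus "E_D n r (n - r - 1) > E_D n (r + 2) (n - (r + 2) - 1)"
      using n by (intro E_D_complement_strict_decreasing) auto
  qed
qed

end
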